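(* Let $G=(V,E)$ have positive edge weights $w$ with $w_e\le\lambda$ for all $e$, and let $OPT$ be the optimum of the bounded forest cover problem on $(G,w,\lambda)$. Define $w'_e=1$ if $w_e>\lambda/2$ and $w'_e=2w_e/\lambda$ otherwise, and let $OPT'$ be the minimum weighted index of a forest cover of $G$ with respect to $w'$. Then $OPT'\le 3\cdot OPT$.
   Context: Bounded forest cover: given a graph $G$ with positive edge weights $w$ and $\lambda\ge0$, find trees $T_1,\dots,T_k$ in $G$, each of total edge weight at most $\lambda$, such that $\bigcup_i V(T_i)$ is a vertex cover of $G$, minimizing $k$. A forest cover of $G$ is a forest $F\subseteq G$ (single-vertex trees allowed) whose vertex set is a vertex cover of $G$; with weights $w'$, its weighted index is $wi(F)=\sum_{e\in E(F)}w'_e+(\text{number of trees of }F)$. *)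

theory Defs
  imports "HOL-Analysis.Analysis"
begin

definition simple_graph :: "'a set \<Rightarrow> 'a set set \<Rightarrow> bool" where
  "simple_graph V E \<longleftrightarrow> finite V \<and> (\<forall>e\<in>E. e \<subseteq> V \<and> card e = 2)"

definition adj_rel :: "'a set set \<Rightarrow> ('a \<times> 'a) set" where
  "adj_rel EH = {(u, v). {u, v} \<in> EH}"

definition subgraph :: "'a set \<Rightarrow> 'a set set \<Rightarrow> 'a set \<Rightarrow> 'a set set \<Rightarrow> bool" where
  "subgraph V E VH EH \<longleftrightarrow> VH \<subseteq> V \<and> EH \<subseteq> E \<and> (\<forall>e\<in>EH. e \<subseteq> VH)"

definition connected_graph :: "'a set \<Rightarrow> 'a set set \<Rightarrow> bool" where
  "connected_graph VH EH \<longleftrightarrow> (\<forall>u\<in>VH. \<forall>v\<in>VH. (u, v) \<in> (adj_rel EH)\<^sup>*)"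

text \<open>Acyclic: no edge lies on a cycle, i.e. removing any edge disconnects its endpoints.\<close>
definition acyclic_graph :: "'a set set \<Rightarrow> bool" where
  "acyclic_graph EH \<longleftrightarrow>
     (\<forall>e\<in>EH. \<forall>u v. e = {u, v} \<longrightarrow> (u, v) \<notin> (adj_rel (EH - {e}))\<^sup>*)"

text \<open>A tree in G (single-vertex trees allowed).\<close>
definition is_tree_in :: "'a set \<Rightarrow> 'a set set \<Rightarrow> 'a set \<Rightarrow> 'a set set \<Rightarrow> bool" where
  "is_tree_in V E VT ET \<longleftrightarrow> subgraph V E VT ET \<and> VT \<noteq> {} \<and>
     connected_graph VT ET \<and> acyclic_graph ET"

definition is_forest_in :: "'a set \<Rightarrow> 'a set set \<Rightarrow> 'a set \<Rightarrow> 'a set set \<Rightarrow> bool" where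
  "is_forest_in V E VF EF \<longleftrightarrow> subgraph V E VF EF \<and> acyclic_graph EF"

definition vertex_cover :: "'a set set \<Rightarrow> 'a set \<Rightarrow> bool" where
  "vertex_cover E C \<longleftrightarrow> (\<forall>e\<in>E. e \<inter> C \<noteq> {})"

definition num_components :: "'a set \<Rightarrow> 'a set set \<Rightarrow> nat" where
  "num_components VH EH = card {{u\<in>VH. (v, u) \<in> (adj_rel EH)\<^sup>*} | v. v \<in> VH}"

definition bounded_tree_cover ::
  "'a set \<Rightarrow> 'a set set \<Rightarrow> ('a set \<Rightarrow> real) \<Rightarrow> real \<Rightarrow> ('a set \<times> 'a set set) list \<Rightarrow> bool" where
  "bounded_tree_cover V E w lam Ts \<longleftrightarrow>
     (\<forall>(VT, ET)\<in>set Ts. is_tree_in V E VT ET \<and> (\<Sum>e\<in>ET. w e) \<le> lam) \<and>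
     vertex_cover E (\<Union>(VT, ET)\<in>set Ts. VT)"

definition OPT_bfc :: "'a set \<Rightarrow> 'a set set \<Rightarrow> ('a set \<Rightarrow> real) \<Rightarrow> real \<Rightarrow> nat" where
  "OPT_bfc V E w lam = (LEAST k. \<exists>Ts. length Ts = k \<and> bounded_tree_cover V E w lam Ts)"

definition forest_cover :: "'a set \<Rightarrow> 'a set set \<Rightarrow> 'a set \<Rightarrow> 'a set set \<Rightarrow> bool" where
  "forest_cover V E VF EF \<longleftrightarrow> is_forest_in V E VF EF \<and> vertex_cover E VF"

definition weighted_index :: "('a set \<Rightarrow> real) \<Rightarrow> 'a set \<Rightarrow> 'a set set \<Rightarrow> real" where
  "weighted_index w' VF EF = (\<Sum>e\<in>EF. w' e) + real (num_components VF EF)"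

definition OPT_wi :: "'a set \<Rightarrow> 'a set set \<Rightarrow> ('a set \<Rightarrow> real) \<Rightarrow> real" where
  "OPT_wi V E w' = Min {weighted_index w' VF EF | VF EF. forest_cover V E VF EF}"

definition scaled_weight :: "('a set \<Rightarrow> real) \<Rightarrow> real \<Rightarrow> 'a set \<Rightarrow> real" where
  "scaled_weight w lam e = (if w e > lam / 2 then 1 else 2 * w e / lam)"

end

theory Submission
  imports Defs
begin

text \<open>Take an optimal bounded forest cover by k trees. The union of their edge sets has a
  spanning forest with the same connectivity, covering the same vertices; it has at most k
  components because every tree lies inside one of them. Since w'(e) \<le> 2 w(e) / \<lambda>,
  each tree has w'-weight at most 2, so the forest has weighted index at most 2k + k.\<close>

lemma adj_rel_mono: "A \<subseteq> B \<Longrightarrow> adj_rel A \<subseteq> adj_rel B"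
  unfolding adj_rel_def by auto

lemma adj_rel_sym: "(u, v) \<in> adj_rel A \<Longrightarrow> (v, u) \<in> adj_rel A"
  unfolding adj_rel_def by (simp add: insert_commute)

lemma rtrancl_adj_rel_sym: "(u, v) \<in> (adj_rel A)\<^sup>* \<Longrightarrow> (v, u) \<in> (adj_rel A)\<^sup>*"
  by (induction rule: rtrancl_induct)
    (auto intro: converse_rtrancl_into_rtrancl adj_rel_sym)

lemma rtrancl_adj_rel_Diff_cycle_edge:
  assumes "{u, v} \<in> A" "(u, v) \<in> (adj_rel (A - {{u, v}}))\<^sup>*"
  shows "(adj_rel (A - {{u, v}}))\<^sup>* = (adj_rel A)\<^sup>*"
proof
  show "(adj_rel (A - {{u, v}}))\<^sup>* \<subseteq> (adj_rel A)\<^sup>*"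
    by (intro rtrancl_mono adj_rel_mono) blast
  have "adj_rel A \<subseteq> (adj_rel (A - {{u, v}}))\<^sup>*"
  proof safe
    fix a b assume ab: "(a, b) \<in> adj_rel A"
    show "(a, b) \<in> (adj_rel (A - {{u, v}}))\<^sup>*"
    proof (cases "{a, b} = {u, v}")
      case True
      then show ?thesis
        using assms(2) rtrancl_adj_rel_sym[OF assms(2)] by (auto simp: doubleton_eq_iff)
    next
      case False
      then show ?thesis using ab unfolding adj_rel_def by auto
    qed
  qed
  then show "(adj_rel A)\<^sup>* \<subseteq> (adj_rel (A - {{u, v}}))\<^sup>*"
    by (rule rtrancl_subset_rtrancl)
qed

text \<open>A minimum-cardinality edge set with the same connectivity has no edge on a cycle,
  since deleting such an edge would keep the connectivity.\<close>

lemma exists_acyclic_spanning_subgraph: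
  assumes "finite A"
  obtains F where "F \<subseteq> A" "(adj_rel F)\<^sup>* = (adj_rel A)\<^sup>*" "acyclic_graph F"
proof -
  define spans where "spans F \<longleftrightarrow> F \<subseteq> A \<and> (adj_rel F)\<^sup>* = (adj_rel A)\<^sup>*" for F
  obtain F where F: "spans F" and min: "\<And>G. spans G \<Longrightarrow> card F \<le> card G"
    using ex_has_least_nat[of spans A card] unfolding spans_def by blast
  have "finite F" using F assms unfolding spans_def by (auto intro: finite_subset)
  have "acyclic_graph F"
    unfolding acyclic_graph_def
  proof (intro ballI allI impI notI)
    fix e u v assume "e \<in> F" "e = {u, v}" "(u, v) \<in> (adj_rel (F - {e}))\<^sup>*"
    then have "spans (F - {e})"
      using F rtrancl_adj_rel_Diff_cycle_edge[of u v F] unfolding spans_def by auto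
    then have "card F \<le> card (F - {e})" by (rule min)
    with \<open>finite F\<close> \<open>e \<in> F\<close> show False by (meson card_Diff1_less not_le)
  qed
  with F that show ?thesis unfolding spans_def by blast
qed

lemma num_components_le_card_connected_cover:
  assumes "finite \<C>" "VH = \<Union>\<C>"
    and "\<And>C. C \<in> \<C> \<Longrightarrow> C \<noteq> {} \<and> (\<forall>u\<in>C. \<forall>v\<in>C. (u, v) \<in> (adj_rel EH)\<^sup>*)"
  shows "num_components VH EH \<le> card \<C>"
proof -
  define comp where "comp v = {u \<in> VH. (v, u) \<in> (adj_rel EH)\<^sup>*}" for v
  have "{comp v | v. v \<in> VH} \<subseteq> (\<lambda>C. comp (SOME x. x \<in> C)) ` \<C>"
  proof safe
    fix v assume "v \<in> VH"
    then obtain C where C: "C \<in> \<C>" "v \<in> C" using assms(2) by blast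
    define r where "r = (SOME x. x \<in> C)"
    have "r \<in> C" unfolding r_def using assms(3)[OF C(1)] by (simp add: some_in_eq)
    then have "(r, v) \<in> (adj_rel EH)\<^sup>*" "(v, r) \<in> (adj_rel EH)\<^sup>*"
      using assms(3)[OF C(1)] C(2) by auto
    then have "comp v = comp r" unfolding comp_def by (auto intro: rtrancl_trans)
    with C(1) show "comp v \<in> (\<lambda>C. comp (SOME x. x \<in> C)) ` \<C>" unfolding r_def by blast
  qed
  then have "num_components VH EH \<le> card ((\<lambda>C. comp (SOME x. x \<in> C)) ` \<C>)"
    unfolding num_components_def comp_def using assms(1) by (intro card_mono) auto
  also have "\<dots> \<le> card \<C>" using assms(1) by (rule card_image_le)
  finally show ?thesis .
qed

lemma sum_Union_le_sum_sum:
  fixes f :: "'a \<Rightarrow> 'b::ordered_comm_monoid_add"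
  assumes "finite \<A>" "\<And>A. A \<in> \<A> \<Longrightarrow> finite A" "\<And>x. x \<in> \<Union>\<A> \<Longrightarrow> 0 \<le> f x"
  shows "sum f (\<Union>\<A>) \<le> (\<Sum>A\<in>\<A>. sum f A)"
  using assms
proof (induction \<A> rule: finite_induct)
  case (insert A \<A>)
  have "sum f (\<Union>(insert A \<A>)) = sum f A + sum f (\<Union>\<A> - A)"
    using insert.prems(1) insert.hyps(1)
    by (subst sum.union_disjoint[symmetric]) (auto intro: arg_cong[where f = "sum f"])
  also have "\<dots> \<le> sum f A + sum f (\<Union>\<A>)"
    using insert.prems insert.hyps(1) by (intro add_left_mono sum_mono2) auto
  also have "\<dots> \<le> sum f A + (\<Sum>B\<in>\<A>. sum f B)"
    using insert.prems by (intro add_left_mono insert.IH) auto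
  finally show ?case using insert.hyps by simp
qed simp

lemma scaled_weight_nonneg: "0 \<le> lam \<Longrightarrow> 0 \<le> w e \<Longrightarrow> 0 \<le> scaled_weight w lam e"
  unfolding scaled_weight_def by simp

lemma scaled_weight_le: "0 < lam \<Longrightarrow> 0 \<le> w e \<Longrightarrow> scaled_weight w lam e \<le> 2 * w e / lam"
  unfolding scaled_weight_def by (simp add: field_simps)

lemma sum_scaled_weight_le_2:
  assumes "\<And>e. e \<in> F \<Longrightarrow> 0 < w e" "sum w F \<le> lam"
  shows "sum (scaled_weight w lam) F \<le> 2"
proof (cases "finite F \<and> F \<noteq> {}")
  case True
  then have "0 < lam" using assms sum_pos[of F w] by fastforce
  have "sum (scaled_weight w lam) F \<le> (\<Sum>e\<in>F. 2 * w e / lam)"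
    using \<open>0 < lam\<close> assms(1) by (intro sum_mono scaled_weight_le) (auto intro: less_imp_le)
  also have "\<dots> = 2 / lam * sum w F" by (simp add: sum_distrib_left)
  also have "\<dots> \<le> 2 / lam * lam" using \<open>0 < lam\<close> assms(2) by (intro mult_left_mono) auto
  finally show ?thesis using \<open>0 < lam\<close> by simp
qed auto

lemma simple_graph_finite_edges: "simple_graph V E \<Longrightarrow> finite E"
  unfolding simple_graph_def by (meson PowI finite_Pow_iff finite_subset subsetI)

lemma bounded_tree_cover_singletons:
  assumes "simple_graph V E" "0 \<le> lam" "set xs = V"
  shows "bounded_tree_cover V E w lam (map (\<lambda>v. ({v}, {})) xs)"
proof -
  have "vertex_cover E V"
    unfolding vertex_cover_def
  proof
    fix e assume "e \<in> E"
    with assms(1) have "e \<subseteq> V" "card e = 2" unfolding simple_graph_def by auto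
    then show "e \<inter> V \<noteq> {}" by (auto simp: Int_absorb2)
  qed
  moreover have "is_tree_in V E {v} {}" if "v \<in> V" for v
    using that unfolding is_tree_in_def subgraph_def connected_graph_def acyclic_graph_def
    by simp
  ultimately show ?thesis
    using assms(2,3) unfolding bounded_tree_cover_def by auto
qed

lemma OPT_bfc_attained:
  assumes "simple_graph V E" "0 \<le> lam"
  obtains Ts where "length Ts = OPT_bfc V E w lam" "bounded_tree_cover V E w lam Ts"
proof -
  have "finite V" using assms(1) unfolding simple_graph_def by simp
  then obtain xs where "set xs = V" using finite_list by auto
  then have "\<exists>k Ts. length Ts = k \<and> bounded_tree_cover V E w lam Ts"
    using bounded_tree_cover_singletons[OF assms] by auto
  then have "\<exists>Ts. length Ts = OPT_bfc V E w lam \<and> bounded_tree_cover V E w lam Ts"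
    unfolding OPT_bfc_def by (rule LeastI_ex)
  with that show ?thesis by auto
qed

lemma OPT_wi_le_weighted_index:
  assumes "simple_graph V E" "forest_cover V E VF EF"
  shows "OPT_wi V E w' \<le> weighted_index w' VF EF"
proof -
  have "{weighted_index w' VF EF | VF EF. forest_cover V E VF EF}
          \<subseteq> (\<lambda>(VF, EF). weighted_index w' VF EF) ` (Pow V \<times> Pow E)"
    unfolding forest_cover_def is_forest_in_def subgraph_def by auto
  moreover have "finite (Pow V \<times> Pow E)"
    using assms(1) simple_graph_finite_edges unfolding simple_graph_def by auto
  ultimately have "finite {weighted_index w' VF EF | VF EF. forest_cover V E VF EF}"
    by (meson finite_imageI finite_subset)
  then show ?thesis
    unfolding OPT_wi_def using assms(2) by (intro Min_le) auto
qed

lemma sum_scaled_weight_tree_edges_le: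
  assumes "finite E" "0 \<le> lam" "\<And>e. e \<in> E \<Longrightarrow> 0 < w e"
    and "bounded_tree_cover V E w lam Ts"
  shows "sum (scaled_weight w lam) (\<Union>(snd ` set Ts)) \<le> 2 * real (length Ts)"
proof -
  have trees: "ET \<subseteq> E" "sum w ET \<le> lam" if "ET \<in> snd ` set Ts" for ET
    using assms(4) that
    unfolding bounded_tree_cover_def is_tree_in_def subgraph_def by fastforce+
  have "sum (scaled_weight w lam) (\<Union>(snd ` set Ts))
          \<le> (\<Sum>ET\<in>snd ` set Ts. sum (scaled_weight w lam) ET)"
    using trees(1) assms(1-3)
    by (intro sum_Union_le_sum_sum scaled_weight_nonneg) (auto intro: finite_subset less_imp_le)
  also have "\<dots> \<le> (\<Sum>ET\<in>snd ` set Ts. 2)"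
    using trees assms(3) by (intro sum_mono sum_scaled_weight_le_2) auto
  also have "\<dots> \<le> 2 * real (length Ts)"
    using card_image_le[of "set Ts" snd] card_length[of Ts] by simp
  finally show ?thesis .
qed

lemma forest_cover_from_bounded_tree_cover:
  assumes "finite E" "0 \<le> lam" "\<And>e. e \<in> E \<Longrightarrow> 0 < w e"
    and "bounded_tree_cover V E w lam Ts"
  obtains VF EF where "forest_cover V E VF EF"
    "weighted_index (scaled_weight w lam) VF EF \<le> 3 * real (length Ts)"
proof -
  define VH where "VH = \<Union>(fst ` set Ts)"
  define EH where "EH = \<Union>(snd ` set Ts)"
  have tree: "is_tree_in V E VT ET" if "(VT, ET) \<in> set Ts" for VT ET
    using assms(4) that unfolding bounded_tree_cover_def by auto
  then have EH_E: "EH \<subseteq> E" and "VH \<subseteq> V" and EH_VH: "\<forall>e\<in>EH. e \<subseteq> VH"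
    unfolding EH_def VH_def is_tree_in_def subgraph_def by fastforce+
  have "finite EH" using EH_E assms(1) by (rule finite_subset)
  then obtain EF where EF: "EF \<subseteq> EH" "(adj_rel EF)\<^sup>* = (adj_rel EH)\<^sup>*" "acyclic_graph EF"
    by (rule exists_acyclic_spanning_subgraph)
  have "vertex_cover E VH"
    using assms(4) unfolding bounded_tree_cover_def VH_def by (simp add: case_prod_beta')
  then have cover: "forest_cover V E VH EF"
    using EF EH_E EH_VH \<open>VH \<subseteq> V\<close>
    unfolding forest_cover_def is_forest_in_def subgraph_def by blast
  have "num_components VH EF \<le> card (fst ` set Ts)"
  proof (rule num_components_le_card_connected_cover)
    fix C assume "C \<in> fst ` set Ts"
    then obtain ET where T: "(C, ET) \<in> set Ts" by force
    have "(adj_rel ET)\<^sup>* \<subseteq> (adj_rel EF)\<^sup>*"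
      unfolding EF(2) EH_def using T by (intro rtrancl_mono adj_rel_mono) force
    then show "C \<noteq> {} \<and> (\<forall>u\<in>C. \<forall>v\<in>C. (u, v) \<in> (adj_rel EF)\<^sup>*)"
      using tree[OF T] unfolding is_tree_in_def connected_graph_def by blast
  qed (simp_all add: VH_def)
  also have "\<dots> \<le> length Ts" using card_image_le card_length le_trans by blast
  finally have components: "num_components VH EF \<le> length Ts" .
  have "sum (scaled_weight w lam) EF \<le> sum (scaled_weight w lam) EH"
    using \<open>finite EH\<close> EF(1) EH_E assms(2,3)
    by (intro sum_mono2 scaled_weight_nonneg) (auto intro: less_imp_le)
  also have "\<dots> \<le> 2 * real (length Ts)"
    unfolding EH_def using assms by (rule sum_scaled_weight_tree_edges_le)
  finally have "weighted_index (scaled_weight w lam) VH EF \<le> 3 * real (length Ts)"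
    using components unfolding weighted_index_def by linarith
  with cover that show ?thesis by blast
qed

theorem mainTheorem10:
  fixes V :: "'a set" and E :: "'a set set" and w :: "'a set \<Rightarrow> real" and lam :: real
  assumes "simple_graph V E"
    and "lam \<ge> 0"
    and "\<forall>e\<in>E. 0 < w e \<and> w e \<le> lam"
  shows "OPT_wi V E (scaled_weight w lam) \<le> 3 * real (OPT_bfc V E w lam)"
proof -
  obtain Ts where Ts: "length Ts = OPT_bfc V E w lam" "bounded_tree_cover V E w lam Ts"
    using OPT_bfc_attained[OF assms(1,2)] .
  obtain VF EF where "forest_cover V E VF EF"
      "weighted_index (scaled_weight w lam) VF EF \<le> 3 * real (length Ts)"
    using forest_cover_from_bounded_tree_cover[OF simple_graph_finite_edges[OF assms(1)] assms(2)
        _ Ts(2)] assms(3) by blast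
  with OPT_wi_le_weighted_index[OF assms(1)] Ts(1) show ?thesis by (metis order.trans)
qed

end
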